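(* Let $A,B\subseteq \mathbb{R}^2$ be finite two-dimensional subsets (i.e., neither is contained in a line) with $0\in A\cap B$. Let $m$ and $n$ be the exact number of vertical lines which cover $A$ and $B$ respectively. Suppose $$|A+B|=\left(\frac{|A|}{m}+\frac{|B|}{n}-1\right)(m+n-1).$$ Then there exists a linear transformation $\varphi:\mathbb{R}^2\to\mathbb{R}^2$ of the form $\varphi(x,y)=(\alpha^{-1}x,\beta^{-1}y)$ for some positive reals $\alpha,\beta$, such that $\varphi(A)$ and $\varphi(B)$ are standard trapezoids $T(m,h,c,d)$ and $T(n,h',c,d)$ respectively, with common slopes $c$ and $d$ (for some integers $h,h'\ge 1$).
   Context: $A+B=\{a+b: a\in A, b\in B\}$ and $|X|$ denotes cardinality. Standard trapezoid: let $m\ge 1$, $h\ge 1$ be integers and $c,d\in\mathbb{R}$ with $c-d\in\mathbb{Z}$ and $h-1+(m-1)c\ge (m-1)d$. A standard trapezoid $T(m,h,c,d)$ is any translate of the finite set $T$ consisting of the points $(x,y)$ of the lattice $\{a(0,1)+b(1,d): a,b\in\mathbb{Z}\}$ satisfying $0\le x\le m-1$, $y\le cx+h-1$ and $y\ge dx$. *)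

theory Defs
  imports "HOL-Analysis.Analysis"
begin

definition sumset :: "(real \<times> real) set \<Rightarrow> (real \<times> real) set \<Rightarrow> (real \<times> real) set" where
  "sumset A B = {a + b | a b. a \<in> A \<and> b \<in> B}"

text \<open>The set T from the definition of a standard trapezoid: points of the lattice
  generated by (0,1) and (1,d) with 0 <= x <= m-1, y <= c x + h - 1, y >= d x.\<close>
definition trap_base :: "nat \<Rightarrow> int \<Rightarrow> real \<Rightarrow> real \<Rightarrow> (real \<times> real) set" where
  "trap_base m h c d =
     {(x, y). (\<exists>a b :: int. (x, y) = (real_of_int b, real_of_int a + real_of_int b * d))
              \<and> 0 \<le> x \<and> x \<le> real m - 1 \<and> y \<le> c * x + real_of_int h - 1 \<and> y \<ge> d * x}"

definition std_trapezoid :: "(real \<times> real) set \<Rightarrow> nat \<Rightarrow> int \<Rightarrow> real \<Rightarrow> real \<Rightarrow> bool" where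
  "std_trapezoid S m h c d \<longleftrightarrow>
     m \<ge> 1 \<and> h \<ge> 1 \<and> c - d \<in> \<int> \<and>
     real_of_int h - 1 + (real m - 1) * c \<ge> (real m - 1) * d \<and>
     (\<exists>t. S = (\<lambda>p. t + p) ` trap_base m h c d)"

end

(*
  Order the distinct abscissae of A and B increasingly and let P i, Q j be the parts of A and B
  lying in their first i + 1 and j + 1 columns.  Adding one column at a time and using
  |S + T| \<ge> |S| + |T| - 1 for the column sums, an induction over (i, j) shows that
  |P i + Q j| \<ge> (i + j + 1) (|P i| / (i + 1) + |Q j| / (j + 1) - 1): the bound at (i + 1, j + 1)
  is a weighted mean of the bounds inherited from (i, j + 1) and (i + 1, j).  Hence equality at
  the last columns propagates to every (i, j) and forces P i + Q (j + 1) = P (i + 1) + Q j.  This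
  exchange identity makes the abscissae, the column minima and the column sizes of A and B
  arithmetic progressions with common differences, and the one-dimensional equality case (which
  is itself an instance of the planar argument) makes all columns progressions with one common
  step.  Rescaling by the two steps turns A and B into standard trapezoids.
*)

theory Submission
  imports Defs
begin

section \<open>Sumsets and arithmetic progressions of reals\<close>

lemma sumset_eq_set_plus: "sumset A B = A + B"
  unfolding sumset_def set_plus_def by blast

lemma card_set_plus_ge:
  fixes S T :: "'a::linordered_ab_group_add set"
  assumes "finite S" "finite T" "S \<noteq> {}" "T \<noteq> {}"
  shows "card S + card T - 1 \<le> card (S + T)"
proof -
  let ?U = "(\<lambda>t. Max S + t) ` T" and ?W = "(\<lambda>s. s + Min T) ` S"
  have card_U: "card ?U = card T" and card_W: "card ?W = card S"
    by (auto intro!: card_image simp: inj_on_def)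
  have "?U \<inter> ?W \<subseteq> {Max S + Min T}"
  proof
    fix z assume "z \<in> ?U \<inter> ?W"
    then obtain s t where st: "s \<in> S" "t \<in> T" "z = Max S + t" "z = s + Min T" by auto
    with assms have "s \<le> Max S" "Min T \<le> t" by auto
    have "Max S + t = s + Min T" using st by simp
    also have "\<dots> \<le> Max S + Min T" using \<open>s \<le> Max S\<close> by (rule add_right_mono)
    finally have "t = Min T" using \<open>Min T \<le> t\<close> by simp
    with st show "z \<in> {Max S + Min T}" by simp
  qed
  then have "card (?U \<inter> ?W) \<le> card {Max S + Min T}"
    by (intro card_mono) simp_all
  moreover have "card ?U + card ?W = card (?U \<union> ?W) + card (?U \<inter> ?W)"
    using assms by (intro card_Un_Int) auto
  moreover have "?U \<union> ?W \<subseteq> S + T"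
    using assms by (auto intro!: set_plus_intro Max_in Min_in)
  then have "card (?U \<union> ?W) \<le> card (S + T)"
    using assms by (intro card_mono finite_set_plus) auto
  ultimately show ?thesis
    using card_U card_W by simp
qed

lemma Min_set_plus:
  fixes S T :: "'a::linordered_ab_group_add set"
  assumes "finite S" "finite T" "S \<noteq> {}" "T \<noteq> {}"
  shows "Min (S + T) = Min S + Min T"
proof (rule Min_eqI)
  show "finite (S + T)" using assms by (simp add: finite_set_plus)
  show "Min S + Min T \<le> z" if "z \<in> S + T" for z
    using that assms by (auto elim!: set_plus_elim intro: add_mono)
  show "Min S + Min T \<in> S + T"
    using assms by (simp add: set_plus_intro)
qed

lemma arith_progs_of_exchange:
  fixes u v :: "nat \<Rightarrow> 'a::ring_1"
  assumes exchange: "\<And>i j. Suc i < m \<Longrightarrow> Suc j < n \<Longrightarrow> u (Suc i) + v j = u i + v (Suc j)"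
    and m: "2 \<le> m" and n: "2 \<le> n"
  shows "i < m \<Longrightarrow> u i = u 0 + of_nat i * (v 1 - v 0)"
    and "j < n \<Longrightarrow> v j = v 0 + of_nat j * (v 1 - v 0)"
proof -
  have step: "u (Suc i) - u i = v (Suc j) - v j" if "Suc i < m" "Suc j < n" for i j
    using exchange[OF that] by (metis add_diff_cancel_left add_diff_cancel_right' diff_diff_eq2)
  have step_u: "u (Suc i) = u i + (v 1 - v 0)" if "Suc i < m" for i
    using step[of i 0] that n by (simp add: algebra_simps)
  have step_v: "v (Suc j) = v j + (v 1 - v 0)" if "Suc j < n" for j
    using step[of 0 j] step[of 0 0] that m n by (simp add: algebra_simps)
  show "i < m \<Longrightarrow> u i = u 0 + of_nat i * (v 1 - v 0)"
  proof (induction i)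
    case (Suc i)
    then have "u (Suc i) = u 0 + of_nat i * (v 1 - v 0) + (v 1 - v 0)"
      using step_u[of i] by simp
    then show ?case by (simp add: algebra_simps)
  qed simp
  show "j < n \<Longrightarrow> v j = v 0 + of_nat j * (v 1 - v 0)"
  proof (induction j)
    case (Suc j)
    then have "v (Suc j) = v 0 + of_nat j * (v 1 - v 0) + (v 1 - v 0)"
      using step_v[of j] by simp
    then show ?case by (simp add: algebra_simps)
  qed simp
qed

definition arith_prog :: "real set \<Rightarrow> real \<Rightarrow> bool" where
  "arith_prog S \<beta> \<longleftrightarrow> (\<forall>k < card S. sorted_list_of_set S ! k = Min S + real k * \<beta>)"

lemma arith_prog_image:
  assumes "finite S" "arith_prog S \<beta>"
  shows "S = (\<lambda>k. Min S + real k * \<beta>) ` {..<card S}"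
proof -
  have "S = set (sorted_list_of_set S)" using assms(1) by simp
  also have "\<dots> = (\<lambda>k. sorted_list_of_set S ! k) ` {..<card S}"
    by (auto simp: set_conv_nth)
  also have "\<dots> = (\<lambda>k. Min S + real k * \<beta>) ` {..<card S}"
    using assms(2) unfolding arith_prog_def by (intro image_cong) auto
  finally show ?thesis .
qed

lemma arith_prog_card_1: "card S = 1 \<Longrightarrow> arith_prog S \<beta>"
  by (erule card_1_singletonE) (simp add: arith_prog_def)

lemma arith_prog_unique:
  assumes "2 \<le> card S" "arith_prog S \<beta>" "arith_prog S \<beta>'"
  shows "\<beta> = \<beta>'"
  using assms(2,3)[unfolded arith_prog_def, THEN spec[of _ 1]] assms(1) by simp

section \<open>Columns of a finite planar set\<close>

locale sorted_abscissae =
  fixes A :: "(real \<times> real) set" and xs :: "real list"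
  assumes finite_A: "finite A" and sorted_xs: "sorted_wrt (<) xs" and set_xs: "set xs = fst ` A"
begin

definition col :: "nat \<Rightarrow> real set" where
  "col i = {y. (xs ! i, y) \<in> A}"

definition pref :: "nat \<Rightarrow> (real \<times> real) set" where
  "pref i = {p \<in> A. fst p \<le> xs ! i}"

lemma nth_le_nth_iff: "i < length xs \<Longrightarrow> j < length xs \<Longrightarrow> xs ! i \<le> xs ! j \<longleftrightarrow> i \<le> j"
  using sorted_xs by (metis leD linorder_le_less_linear order.order_iff_strict sorted_wrt_nth_less)

lemma mem_A_iff: "(x, y) \<in> A \<longleftrightarrow> (\<exists>k < length xs. x = xs ! k \<and> y \<in> col k)"
proof
  assume xy: "(x, y) \<in> A"
  then have "x \<in> set xs" using set_xs by force
  then obtain k where "k < length xs" "x = xs ! k" by (auto simp: in_set_conv_nth)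
  with xy show "\<exists>k < length xs. x = xs ! k \<and> y \<in> col k" by (auto simp: col_def)
qed (auto simp: col_def)

lemma finite_col: "finite (col i)"
proof -
  have "col i \<subseteq> snd ` A" unfolding col_def by force
  then show ?thesis using finite_A finite_subset by blast
qed

lemma col_nonempty: "i < length xs \<Longrightarrow> col i \<noteq> {}"
  using nth_mem[of i xs] by (auto simp: set_xs col_def)

lemma card_col_pos: "i < length xs \<Longrightarrow> 0 < card (col i)"
  using col_nonempty finite_col by (simp add: card_gt_0_iff)

lemma finite_pref: "finite (pref i)"
  using finite_A by (simp add: pref_def)

lemma le_nth_iff:
  assumes "(x, y) \<in> A" "j < length xs"
  shows "x \<le> xs ! j \<longleftrightarrow> (\<exists>k \<le> j. x = xs ! k)"
proof -
  obtain k where k: "k < length xs" "x = xs ! k"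
    using assms(1) mem_A_iff by auto
  have "xs ! k = xs ! k' \<longleftrightarrow> k = k'" if "k' < length xs" for k'
    using nth_le_nth_iff[OF k(1) that] nth_le_nth_iff[OF that k(1)] by auto
  then show ?thesis
    using k assms(2) nth_le_nth_iff[OF k(1) assms(2)] by (metis le_trans not_le order.strict_trans1)
qed

lemma pref_0: "0 < length xs \<Longrightarrow> pref 0 = {xs ! 0} \<times> col 0"
  by (auto simp: pref_def col_def le_nth_iff)

lemma pref_Suc:
  "Suc i < length xs \<Longrightarrow> pref (Suc i) = pref i \<union> {xs ! Suc i} \<times> col (Suc i)"
  by (auto simp: pref_def col_def le_nth_iff le_Suc_eq)

lemma pref_disjoint_col_Suc: "Suc i < length xs \<Longrightarrow> pref i \<inter> {xs ! Suc i} \<times> col (Suc i) = {}"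
  by (auto simp: pref_def nth_le_nth_iff)

lemma pref_last: "0 < length xs \<Longrightarrow> pref (length xs - 1) = A"
  by (auto simp: pref_def mem_A_iff nth_le_nth_iff)

lemma card_pref_0: "0 < length xs \<Longrightarrow> card (pref 0) = card (col 0)"
  by (simp add: pref_0 card_cartesian_product)

lemma card_pref_Suc: "Suc i < length xs \<Longrightarrow> card (pref (Suc i)) = card (pref i) + card (col (Suc i))"
  using pref_Suc pref_disjoint_col_Suc finite_pref finite_col
  by (simp add: card_Un_disjoint card_cartesian_product)

end

section \<open>Sums of column prefixes\<close>

lemma bound_recurrence_identity:
  fixes p q Sa Sb a b :: real
  assumes "p > 0" "q > 0"
  shows "(p + q) * ((p + q + 1) * ((Sa + a) / (p + 1) + (Sb + b) / (q + 1) - 1)) =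
     p * ((p + q) * (Sa / p + (Sb + b) / (q + 1) - 1) + (a + b - 1)) +
     q * ((p + q) * ((Sa + a) / (p + 1) + Sb / q - 1) + (a + b - 1))"
proof -
  have "p + 1 \<noteq> 0" "q + 1 \<noteq> 0" using assms by auto
  with assms show ?thesis by (simp add: divide_simps) algebra
qed

lemma le_of_weighted_recurrence:
  fixes P Q V V1 V2 N N1 N2 w c :: real
  assumes "P > 0" "Q > 0" "(P + Q) * V = P * (V1 + w) + Q * (V2 + w)"
    and "V1 \<le> N1" "V2 \<le> N2" "w \<le> c" "N1 + c \<le> N" "N2 + c \<le> N"
  shows "V \<le> N"
proof -
  have "P * (V1 + w) + Q * (V2 + w) \<le> (P + Q) * N"
    using assms by (simp add: distrib_right add_mono mult_left_mono)
  then have "(P + Q) * V \<le> (P + Q) * N" using assms(3) by simp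
  then show ?thesis using assms(1,2) by (simp add: mult_le_cancel_left_pos)
qed

lemma eq_of_weighted_recurrence:
  fixes P Q V V1 V2 N N1 N2 w c :: real
  assumes "P > 0" "Q > 0" "(P + Q) * V = P * (V1 + w) + Q * (V2 + w)"
    and "V1 \<le> N1" "V2 \<le> N2" "w \<le> c" "N1 + c \<le> N" "N2 + c \<le> N" "N = V"
  shows "N1 = V1" "N2 = V2" "c = w" "N = N1 + c" "N = N2 + c"
proof -
  have "P * (V1 + w) \<le> P * N" "Q * (V2 + w) \<le> Q * N"
    using assms by (simp_all add: mult_left_mono)
  moreover have "P * (V1 + w) + Q * (V2 + w) = P * N + Q * N"
    using assms(3,9) by (simp add: distrib_right)
  ultimately have "P * (V1 + w) = P * N" "Q * (V2 + w) = Q * N" by linarith+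
  then have "V1 + w = N" "V2 + w = N" using assms(1,2) by simp_all
  then show "N1 = V1" "N2 = V2" "c = w" "N = N1 + c" "N = N2 + c" using assms(4-8) by linarith+
qed

lemma set_plus_Times: "(S \<times> S') + (T \<times> T') = (S + T) \<times> (S' + T')"
  by (force simp: set_plus_def)

locale column_pair = a: sorted_abscissae A xs + b: sorted_abscissae B ys
  for A xs B ys
begin

definition prefix_sum :: "nat \<Rightarrow> nat \<Rightarrow> (real \<times> real) set" where
  "prefix_sum i j = a.pref i + b.pref j"

text \<open>The rightmost column of \<open>prefix_sum i j\<close>; it misses \<open>prefix_sum (i - 1) j\<close> and
  \<open>prefix_sum i (j - 1)\<close>.\<close>

definition top_column :: "nat \<Rightarrow> nat \<Rightarrow> (real \<times> real) set" where
  "top_column i j = {xs ! i + ys ! j} \<times> (a.col i + b.col j)"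

text \<open>The right-hand side of the theorem for the first \<open>i + 1\<close> and \<open>j + 1\<close> columns.\<close>

definition bound :: "nat \<Rightarrow> nat \<Rightarrow> real" where
  "bound i j = (real i + real j + 1) *
     (real (card (a.pref i)) / (real i + 1) + real (card (b.pref j)) / (real j + 1) - 1)"

definition tight :: "nat \<Rightarrow> nat \<Rightarrow> bool" where
  "tight i j \<longleftrightarrow> real (card (prefix_sum i j)) = bound i j"

end

sublocale column_pair \<subseteq> swap: column_pair B ys A xs ..

context column_pair
begin

lemma swap_prefix_sum: "swap.prefix_sum j i = prefix_sum i j"
  by (simp add: swap.prefix_sum_def prefix_sum_def add.commute)

lemma swap_top_column: "swap.top_column j i = top_column i j"
  by (simp add: swap.top_column_def top_column_def add.commute)

lemma swap_bound: "swap.bound j i = bound i j"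
  by (simp add: swap.bound_def bound_def algebra_simps)

lemma swap_tight: "swap.tight j i = tight i j"
  by (simp add: swap.tight_def tight_def swap_prefix_sum swap_bound)

lemma finite_prefix_sum: "finite (prefix_sum i j)"
  by (simp add: prefix_sum_def finite_set_plus a.finite_pref b.finite_pref)

lemma finite_top_column: "finite (top_column i j)"
  by (simp add: top_column_def finite_set_plus a.finite_col b.finite_col)

lemma card_top_column: "card (top_column i j) = card (a.col i + b.col j)"
  by (simp add: top_column_def card_cartesian_product)

lemma fst_le_of_mem_prefix_sum: "p \<in> prefix_sum i j \<Longrightarrow> fst p \<le> xs ! i + ys ! j"
  by (auto simp: prefix_sum_def a.pref_def b.pref_def elim!: set_plus_elim intro: add_mono)

lemma top_mem_prefix_sum_iff:
  "(xs ! i + ys ! j, z) \<in> prefix_sum i j \<longleftrightarrow> z \<in> a.col i + b.col j"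
proof
  assume "(xs ! i + ys ! j, z) \<in> prefix_sum i j"
  then obtain p q where pq: "(xs ! i + ys ! j, z) = p + q" "p \<in> a.pref i" "q \<in> b.pref j"
    unfolding prefix_sum_def by (rule set_plus_elim)
  obtain x1 y1 x2 y2 where p: "p = (x1, y1)" and q: "q = (x2, y2)" by fastforce
  have "x1 \<le> xs ! i" "x2 \<le> ys ! j" "xs ! i + ys ! j = x1 + x2" "z = y1 + y2"
    using pq by (simp_all add: p q a.pref_def b.pref_def)
  then have "x1 = xs ! i" "x2 = ys ! j" by linarith+
  with pq \<open>z = y1 + y2\<close> show "z \<in> a.col i + b.col j"
    by (auto simp: p q a.pref_def b.pref_def a.col_def b.col_def)
next
  assume "z \<in> a.col i + b.col j"
  then obtain y1 y2 where "y1 \<in> a.col i" "y2 \<in> b.col j" "z = y1 + y2"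
    by (rule set_plus_elim)
  then have "(xs ! i, y1) + (ys ! j, y2) \<in> prefix_sum i j"
    unfolding prefix_sum_def
    by (intro set_plus_intro) (simp_all add: a.pref_def b.pref_def a.col_def b.col_def)
  then show "(xs ! i + ys ! j, z) \<in> prefix_sum i j" using \<open>z = y1 + y2\<close> by simp
qed

lemma top_column_subset: "top_column i j \<subseteq> prefix_sum i j"
  using top_mem_prefix_sum_iff by (auto simp: top_column_def)

lemma prefix_sum_0_0: "0 < length xs \<Longrightarrow> 0 < length ys \<Longrightarrow> prefix_sum 0 0 = top_column 0 0"
  by (simp add: prefix_sum_def top_column_def a.pref_0 b.pref_0 set_plus_Times)
    (simp add: set_plus_def)

lemma prefix_sum_disjoint_top_column:
  assumes "Suc i < length xs"
  shows "prefix_sum i j \<inter> top_column (Suc i) j = {}"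
proof -
  have "xs ! i < xs ! Suc i" using a.nth_le_nth_iff[of "Suc i" i] assms by simp
  then show ?thesis
    using fst_le_of_mem_prefix_sum[of _ i j] by (force simp: top_column_def)
qed

lemma card_prefix_sum_Suc:
  assumes "Suc i < length xs"
  shows "card (prefix_sum i j) + card (a.col (Suc i) + b.col j) \<le> card (prefix_sum (Suc i) j)"
    and "card (prefix_sum (Suc i) j) = card (prefix_sum i j) + card (a.col (Suc i) + b.col j)
      \<Longrightarrow> prefix_sum i j = prefix_sum (Suc i) j - top_column (Suc i) j"
proof -
  let ?U = "prefix_sum i j \<union> top_column (Suc i) j"
  have card_U: "card ?U = card (prefix_sum i j) + card (a.col (Suc i) + b.col j)"
    using prefix_sum_disjoint_top_column[OF assms] finite_prefix_sum finite_top_column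
    by (simp add: card_Un_disjoint card_top_column)
  have "prefix_sum i j \<subseteq> prefix_sum (Suc i) j"
    unfolding prefix_sum_def using a.pref_Suc[OF assms] by (intro set_plus_mono2) auto
  then have U: "?U \<subseteq> prefix_sum (Suc i) j"
    using top_column_subset by blast
  show "card (prefix_sum i j) + card (a.col (Suc i) + b.col j) \<le> card (prefix_sum (Suc i) j)"
    using card_mono[OF finite_prefix_sum U] card_U by simp
  show "prefix_sum i j = prefix_sum (Suc i) j - top_column (Suc i) j"
    if "card (prefix_sum (Suc i) j) = card (prefix_sum i j) + card (a.col (Suc i) + b.col j)"
  proof -
    have "?U = prefix_sum (Suc i) j"
      using card_subset_eq[OF finite_prefix_sum U] card_U that by simp
    then show ?thesis using prefix_sum_disjoint_top_column[OF assms] by blast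
  qed
qed

lemma card_col_sum_ge:
  assumes "i < length xs" "j < length ys"
  shows "real (card (a.col i)) + real (card (b.col j)) - 1 \<le> real (card (a.col i + b.col j))"
  using card_set_plus_ge[OF a.finite_col b.finite_col a.col_nonempty b.col_nonempty, OF assms]
    a.card_col_pos[OF assms(1)] by linarith

lemma bound_0_0:
  "0 < length xs \<Longrightarrow> 0 < length ys \<Longrightarrow> bound 0 0 = real (card (a.col 0)) + real (card (b.col 0)) - 1"
  by (simp add: bound_def a.card_pref_0 b.card_pref_0)

lemma bound_Suc_0:
  assumes "Suc i < length xs" "0 < length ys"
  shows "bound (Suc i) 0 = bound i 0 + (real (card (a.col (Suc i))) + real (card (b.col 0)) - 1)"
  using assms by (simp add: bound_def a.card_pref_Suc b.card_pref_0 field_simps)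

lemma bound_Suc_Suc:
  assumes "Suc i < length xs" "Suc j < length ys"
  defines "w \<equiv> real (card (a.col (Suc i))) + real (card (b.col (Suc j))) - 1"
  shows "(real i + 1 + (real j + 1)) * bound (Suc i) (Suc j) =
    (real i + 1) * (bound i (Suc j) + w) + (real j + 1) * (bound (Suc i) j + w)"
  using bound_recurrence_identity[of "real i + 1" "real j + 1" "real (card (a.pref i))"
      "real (card (a.col (Suc i)))" "real (card (b.pref j))" "real (card (b.col (Suc j)))"]
  by (simp add: bound_def w_def a.card_pref_Suc[OF assms(1)] b.card_pref_Suc[OF assms(2)]
      algebra_simps)

end

context column_pair
begin

lemma card_prefix_sum_Suc_right:
  assumes "Suc j < length ys"
  shows "card (prefix_sum i j) + card (a.col i + b.col (Suc j)) \<le> card (prefix_sum i (Suc j))"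
    and "card (prefix_sum i (Suc j)) = card (prefix_sum i j) + card (a.col i + b.col (Suc j))
      \<Longrightarrow> prefix_sum i j = prefix_sum i (Suc j) - top_column i (Suc j)"
  using swap.card_prefix_sum_Suc[OF assms, of i]
  by (simp_all add: swap_prefix_sum swap_top_column add.commute)

lemma bound_0_Suc:
  assumes "0 < length xs" "Suc j < length ys"
  shows "bound 0 (Suc j) = bound 0 j + (real (card (a.col 0)) + real (card (b.col (Suc j))) - 1)"
  using swap.bound_Suc_0[OF assms(2,1)] by (simp add: swap_bound)

lemma bound_le_card_prefix_sum:
  "i < length xs \<Longrightarrow> j < length ys \<Longrightarrow> bound i j \<le> real (card (prefix_sum i j))"
proof (induction i arbitrary: j)
  case 0
  then show ?case
  proof (induction j)
    case 0
    then show ?case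
      using bound_0_0 prefix_sum_0_0 card_top_column card_col_sum_ge[of 0 0] by simp
  next
    case (Suc j)
    then show ?case
      using bound_0_Suc[of j] card_prefix_sum_Suc_right(1)[of j 0] card_col_sum_ge[of 0 "Suc j"]
      by (simp flip: of_nat_add)
  qed
next
  case (Suc i)
  note IH_i = Suc.IH
  from Suc.prems show ?case
  proof (induction j)
    case 0
    then show ?case
      using IH_i[of 0] bound_Suc_0[of i] card_prefix_sum_Suc(1)[of i 0]
        card_col_sum_ge[of "Suc i" 0]
      by (simp flip: of_nat_add)
  next
    case (Suc j)
    have "real (card (prefix_sum i (Suc j))) + real (card (a.col (Suc i) + b.col (Suc j)))
        \<le> real (card (prefix_sum (Suc i) (Suc j)))"
      using card_prefix_sum_Suc(1)[of i "Suc j"] Suc.prems by (simp flip: of_nat_add)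
    moreover have "real (card (prefix_sum (Suc i) j)) + real (card (a.col (Suc i) + b.col (Suc j)))
        \<le> real (card (prefix_sum (Suc i) (Suc j)))"
      using card_prefix_sum_Suc_right(1)[of j "Suc i"] Suc.prems by (simp flip: of_nat_add)
    ultimately show ?case
      using le_of_weighted_recurrence[OF _ _ bound_Suc_Suc[of i j]] IH_i[of "Suc j"] Suc
        card_col_sum_ge[of "Suc i" "Suc j"]
      by simp
  qed
qed

lemma tight_Suc_left:
  assumes "Suc i < length xs" "j < length ys" "tight (Suc i) j"
  shows "tight i j"
    and "card (prefix_sum (Suc i) j) = card (prefix_sum i j) + card (a.col (Suc i) + b.col j)"
    and "card (a.col (Suc i) + b.col j) + 1 = card (a.col (Suc i)) + card (b.col j)"
proof -
  define c where "c = real (card (a.col (Suc i) + b.col j))"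
  define w where "w = real (card (a.col (Suc i))) + real (card (b.col j)) - 1"
  have step: "real (card (prefix_sum i j)) + c \<le> real (card (prefix_sum (Suc i) j))"
    using card_prefix_sum_Suc(1)[OF assms(1), of j] unfolding c_def by (simp flip: of_nat_add)
  have "w \<le> c" using card_col_sum_ge assms unfolding c_def w_def by simp
  have le: "bound i j \<le> real (card (prefix_sum i j))"
    using bound_le_card_prefix_sum assms by simp
  have "real (card (prefix_sum i j)) = bound i j \<and> c = w \<and>
      real (card (prefix_sum (Suc i) j)) = real (card (prefix_sum i j)) + c"
  proof (cases j)
    case 0
    then show ?thesis
      using bound_Suc_0[of i] assms step \<open>w \<le> c\<close> le unfolding tight_def w_def by simp
  next
    case (Suc j')
    have "real (card (prefix_sum (Suc i) j')) + c \<le> real (card (prefix_sum (Suc i) j))"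
      using card_prefix_sum_Suc_right(1)[of j' "Suc i"] assms Suc
      unfolding c_def by (simp flip: of_nat_add)
    then show ?thesis
      using eq_of_weighted_recurrence[OF _ _ bound_Suc_Suc[of i j'] le[unfolded Suc]
          bound_le_card_prefix_sum[of "Suc i" j']] assms Suc step \<open>w \<le> c\<close>
      unfolding tight_def w_def by simp
  qed
  then show "tight i j"
    and "card (prefix_sum (Suc i) j) = card (prefix_sum i j) + card (a.col (Suc i) + b.col j)"
    and "card (a.col (Suc i) + b.col j) + 1 = card (a.col (Suc i)) + card (b.col j)"
    unfolding tight_def c_def w_def by (simp_all flip: of_nat_add)
qed

end

context column_pair
begin

lemma tight_Suc_right:
  assumes "i < length xs" "Suc j < length ys" "tight i (Suc j)"
  shows "tight i j"
    and "card (prefix_sum i (Suc j)) = card (prefix_sum i j) + card (a.col i + b.col (Suc j))"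
    and "card (a.col i + b.col (Suc j)) + 1 = card (a.col i) + card (b.col (Suc j))"
  using swap.tight_Suc_left[OF assms(2,1)] assms(3)
  by (simp_all add: swap_tight swap_prefix_sum add.commute)

lemma tight_mono:
  assumes "i \<le> i'" "j \<le> j'" "i' < length xs" "j' < length ys" "tight i' j'"
  shows "tight i j"
proof -
  from assms(1) have "tight i j'"
  proof (induction i rule: inc_induct)
    case (step n)
    then show ?case using tight_Suc_left(1)[of n j'] assms(3,4) by simp
  qed (rule assms(5))
  from assms(2) this show "tight i j"
  proof (induction j rule: inc_induct)
    case (step n)
    then show ?case using tight_Suc_right(1)[of i n] assms by simp
  qed
qed

end

section \<open>The equality case\<close>

locale extremal_column_pair = column_pair +
  assumes two_le_length_xs: "2 \<le> length xs" and two_le_length_ys: "2 \<le> length ys"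
    and tight_last: "tight (length xs - 1) (length ys - 1)"
begin

lemma tight_all: "i < length xs \<Longrightarrow> j < length ys \<Longrightarrow> tight i j"
  using tight_mono[OF _ _ _ _ tight_last] by simp

lemma card_col_sum_eq:
  assumes "i < length xs" "j < length ys"
  shows "card (a.col i + b.col j) + 1 = card (a.col i) + card (b.col j)"
proof (cases i)
  case (Suc i')
  then show ?thesis using tight_Suc_left(3)[of i' j] tight_all assms by simp
next
  case 0
  show ?thesis
  proof (cases j)
    case (Suc j')
    then show ?thesis using tight_Suc_right(3)[of i j'] tight_all assms by simp
  next
    case 0
    then show ?thesis
      using tight_all[of 0 0] assms \<open>i = 0\<close> a.card_col_pos[of 0]
      by (simp add: tight_def prefix_sum_0_0 card_top_column bound_0_0 flip: of_nat_add)
  qed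
qed

lemma exchange:
  assumes "Suc i < length xs" "Suc j < length ys"
  shows "xs ! Suc i + ys ! j = xs ! i + ys ! Suc j"
    and "a.col (Suc i) + b.col j = a.col i + b.col (Suc j)"
proof -
  have tight: "tight (Suc i) (Suc j)" using tight_all assms by simp
  have "prefix_sum (Suc i) j = prefix_sum (Suc i) (Suc j) - top_column (Suc i) (Suc j)"
    using card_prefix_sum_Suc_right(2)[OF assms(2)] tight_Suc_right(2)[OF _ assms(2) tight] assms
    by simp
  moreover have "prefix_sum i (Suc j) = prefix_sum (Suc i) (Suc j) - top_column (Suc i) (Suc j)"
    using card_prefix_sum_Suc(2)[OF assms(1)] tight_Suc_left(2)[OF assms(1) _ tight] assms
    by simp
  ultimately have eq: "prefix_sum (Suc i) j = prefix_sum i (Suc j)" by simp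
  obtain z z' where "z \<in> a.col (Suc i) + b.col j" "z' \<in> a.col i + b.col (Suc j)"
    using a.col_nonempty b.col_nonempty assms
    by (metis Suc_lessD all_not_in_conv set_plus_intro)
  then have "(xs ! Suc i + ys ! j, z) \<in> prefix_sum i (Suc j)"
    and "(xs ! i + ys ! Suc j, z') \<in> prefix_sum (Suc i) j"
    using top_mem_prefix_sum_iff eq by auto
  then show x_eq: "xs ! Suc i + ys ! j = xs ! i + ys ! Suc j"
    using fst_le_of_mem_prefix_sum by (metis fst_conv order.antisym)
  show "a.col (Suc i) + b.col j = a.col i + b.col (Suc j)"
  proof (rule set_eqI)
    fix z
    show "z \<in> a.col (Suc i) + b.col j \<longleftrightarrow> z \<in> a.col i + b.col (Suc j)"
      using top_mem_prefix_sum_iff[of "Suc i" j z] top_mem_prefix_sum_iff[of i "Suc j" z] eq x_eq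
      by simp
  qed
qed

lemma nth_arith:
  shows "i < length xs \<Longrightarrow> xs ! i = xs ! 0 + real i * (ys ! 1 - ys ! 0)"
    and "j < length ys \<Longrightarrow> ys ! j = ys ! 0 + real j * (ys ! 1 - ys ! 0)"
  using arith_progs_of_exchange[where u = "(!) xs" and v = "(!) ys",
      OF exchange(1) two_le_length_xs two_le_length_ys] by simp_all

lemma Min_col_arith:
  defines "D \<equiv> Min (b.col 1) - Min (b.col 0)"
  shows "i < length xs \<Longrightarrow> Min (a.col i) = Min (a.col 0) + real i * D"
    and "j < length ys \<Longrightarrow> Min (b.col j) = Min (b.col 0) + real j * D"
proof -
  have "Min (a.col (Suc i)) + Min (b.col j) = Min (a.col i) + Min (b.col (Suc j))"
    if "Suc i < length xs" "Suc j < length ys" for i j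
    using exchange(2)[OF that] that a.col_nonempty b.col_nonempty
      Min_set_plus[OF a.finite_col b.finite_col, of "Suc i" j]
      Min_set_plus[OF a.finite_col b.finite_col, of i "Suc j"]
    by simp
  from arith_progs_of_exchange[where u = "\<lambda>i. Min (a.col i)" and v = "\<lambda>j. Min (b.col j)",
      OF this two_le_length_xs two_le_length_ys]
  show "i < length xs \<Longrightarrow> Min (a.col i) = Min (a.col 0) + real i * D"
    and "j < length ys \<Longrightarrow> Min (b.col j) = Min (b.col 0) + real j * D"
    unfolding D_def by simp_all
qed

lemma card_col_arith:
  defines "\<delta> \<equiv> int (card (b.col 1)) - int (card (b.col 0))"
  shows "i < length xs \<Longrightarrow> int (card (a.col i)) = int (card (a.col 0)) + int i * \<delta>"
    and "j < length ys \<Longrightarrow> int (card (b.col j)) = int (card (b.col 0)) + int j * \<delta>"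
proof -
  have "int (card (a.col (Suc i))) + int (card (b.col j)) =
      int (card (a.col i)) + int (card (b.col (Suc j)))"
    if "Suc i < length xs" "Suc j < length ys" for i j
    using exchange(2)[OF that] card_col_sum_eq[of "Suc i" j] card_col_sum_eq[of i "Suc j"] that
    by simp
  from arith_progs_of_exchange[where u = "\<lambda>i. int (card (a.col i))"
      and v = "\<lambda>j. int (card (b.col j))", OF this two_le_length_xs two_le_length_ys]
  show "i < length xs \<Longrightarrow> int (card (a.col i)) = int (card (a.col 0)) + int i * \<delta>"
    and "j < length ys \<Longrightarrow> int (card (b.col j)) = int (card (b.col 0)) + int j * \<delta>"
    unfolding \<delta>_def by simp_all
qed

end

lemma arith_prog_of_card_set_plus_eq:
  fixes S T :: "real set"
  assumes "finite S" "finite T" "2 \<le> card S" "2 \<le> card T"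
    and "card (S + T) + 1 = card S + card T"
  shows "\<exists>\<beta>>0. arith_prog S \<beta> \<and> arith_prog T \<beta>"
proof -
  define xs ys where "xs = sorted_list_of_set S" and "ys = sorted_list_of_set T"
  interpret column_pair "S \<times> {0}" xs "T \<times> {0}" ys
    by unfold_locales (simp_all add: xs_def ys_def assms(1,2))
  have len: "length xs = card S" "length ys = card T"
    by (simp_all add: xs_def ys_def)
  have "a.pref (length xs - 1) = S \<times> {0}" "b.pref (length ys - 1) = T \<times> {0}"
    using a.pref_last b.pref_last len assms(3,4) by simp_all
  then have "prefix_sum (length xs - 1) (length ys - 1) = (S + T) \<times> {0}"
    by (simp add: prefix_sum_def set_plus_Times)
  then have "tight (length xs - 1) (length ys - 1)"
    using assms(3-5) len \<open>a.pref _ = _\<close> \<open>b.pref _ = _\<close>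
    by (simp add: tight_def bound_def card_cartesian_product of_nat_diff flip: of_nat_add)
  then interpret extremal_column_pair "S \<times> {0}" xs "T \<times> {0}" ys
    by unfold_locales (use len assms(3,4) in auto)
  define \<beta> where "\<beta> = ys ! 1 - ys ! 0"
  have "\<beta> > 0"
    using b.nth_le_nth_iff[of 1 0] len assms(4) by (simp add: \<beta>_def)
  moreover have "S \<noteq> {}" "T \<noteq> {}" using assms(3,4) by auto
  then have "xs ! 0 = Min S" "ys ! 0 = Min T"
    using assms(1,2) by (simp_all add: xs_def ys_def sorted_list_of_set_nonempty)
  then have "arith_prog S \<beta>" "arith_prog T \<beta>"
    using nth_arith len unfolding arith_prog_def xs_def ys_def \<beta>_def by simp_all
  ultimately show ?thesis by blast
qed

context sorted_abscissae
begin

lemma exists_two_le_card_col: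
  assumes "\<not> collinear A"
    and "\<And>i. i < length xs \<Longrightarrow> xs ! i = xs ! 0 + real i * g"
    and "\<And>i. i < length xs \<Longrightarrow> Min (col i) = Min (col 0) + real i * D"
  shows "\<exists>i < length xs. 2 \<le> card (col i)"
proof (rule ccontr)
  assume "\<not> ?thesis"
  then have "card (col i) = 1" if "i < length xs" for i
    using card_col_pos[OF that] that by fastforce
  then have singleton: "col i = {Min (col i)}" if "i < length xs" for i
    using that by (metis Min_singleton card_1_singletonE)
  have "\<exists>c. (x, y) = (xs ! 0, Min (col 0)) + c *\<^sub>R (g, D)" if "(x, y) \<in> A" for x y
  proof -
    obtain k where k: "k < length xs" "x = xs ! k" "y \<in> col k"
      using \<open>(x, y) \<in> A\<close> by (auto simp: mem_A_iff)
    then have "(x, y) = (xs ! 0, Min (col 0)) + real k *\<^sub>R (g, D)"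
      using singleton[OF k(1)] assms(2,3)[OF k(1)] by (simp add: algebra_simps)
    then show ?thesis ..
  qed
  then have "collinear A"
    unfolding collinear_alt by fast
  with assms(1) show False ..
qed

end

context extremal_column_pair
begin

lemma common_step:
  assumes "\<not> collinear A" "\<not> collinear B"
  shows "\<exists>\<beta>>0. (\<forall>i < length xs. arith_prog (a.col i) \<beta>) \<and> (\<forall>j < length ys. arith_prog (b.col j) \<beta>)"
proof -
  obtain i0 where i0: "i0 < length xs" "2 \<le> card (a.col i0)"
    using a.exists_two_le_card_col[OF assms(1) nth_arith(1) Min_col_arith(1)] by blast
  obtain j0 where j0: "j0 < length ys" "2 \<le> card (b.col j0)"
    using b.exists_two_le_card_col[OF assms(2) nth_arith(2) Min_col_arith(2)] by blast
  have common: "\<exists>\<beta>>0. arith_prog (a.col i) \<beta> \<and> arith_prog (b.col j) \<beta>"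
    if "i < length xs" "j < length ys" "2 \<le> card (a.col i)" "2 \<le> card (b.col j)" for i j
    using arith_prog_of_card_set_plus_eq[OF a.finite_col b.finite_col that(3,4)]
      card_col_sum_eq[OF that(1,2)] by simp
  obtain \<beta> where \<beta>: "\<beta> > 0" "arith_prog (a.col i0) \<beta>" "arith_prog (b.col j0) \<beta>"
    using common[OF i0(1) j0(1) i0(2) j0(2)] by blast
  have "arith_prog (a.col i) \<beta>" if i: "i < length xs" for i
  proof (cases "2 \<le> card (a.col i)")
    case True
    then obtain \<beta>' where "arith_prog (a.col i) \<beta>'" "arith_prog (b.col j0) \<beta>'"
      using common[OF i j0(1) True j0(2)] by blast
    then show ?thesis using arith_prog_unique[OF j0(2) \<beta>(3)] by simp
  next
    case False
    then show ?thesis using a.card_col_pos[OF i] by (intro arith_prog_card_1) simp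
  qed
  moreover have "arith_prog (b.col j) \<beta>" if j: "j < length ys" for j
  proof (cases "2 \<le> card (b.col j)")
    case True
    then obtain \<beta>' where "arith_prog (a.col i0) \<beta>'" "arith_prog (b.col j) \<beta>'"
      using common[OF i0(1) j i0(2) True] by blast
    then show ?thesis using arith_prog_unique[OF i0(2) \<beta>(2)] by simp
  next
    case False
    then show ?thesis using b.card_col_pos[OF j] by (intro arith_prog_card_1) simp
  qed
  ultimately show ?thesis using \<beta>(1) by blast
qed

end

section \<open>Standard trapezoids\<close>

lemma trap_base_eq_image:
  "trap_base m h (d + of_int \<delta>) d =
     (\<lambda>(i, k). (real i, real k + real i * d)) ` {(i, k). i < m \<and> int k < h + \<delta> * int i}"
proof
  show "trap_base m h (d + of_int \<delta>) d \<subseteq>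
      (\<lambda>(i, k). (real i, real k + real i * d)) ` {(i, k). i < m \<and> int k < h + \<delta> * int i}"
  proof
    fix p assume "p \<in> trap_base m h (d + of_int \<delta>) d"
    then obtain a b :: int where p: "p = (of_int b, of_int a + of_int b * d)"
      and b: "0 \<le> real_of_int b" "real_of_int b \<le> real m - 1"
      and a: "real_of_int a \<le> real_of_int (\<delta> * b + h - 1)" "0 \<le> real_of_int a"
      unfolding trap_base_def by (auto simp: algebra_simps)
    then have "0 \<le> a" "a \<le> \<delta> * b + h - 1" "0 \<le> b" "b < int m"
      by (simp_all only: of_int_le_iff of_int_0_le_iff)
    then have "(nat b, nat a) \<in> {(i, k). i < m \<and> int k < h + \<delta> * int i}" by simp
    moreover have "p = (real (nat b), real (nat a) + real (nat b) * d)"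
      using p \<open>0 \<le> a\<close> \<open>0 \<le> b\<close> by simp
    ultimately show "p \<in> (\<lambda>(i, k). (real i, real k + real i * d)) `
        {(i, k). i < m \<and> int k < h + \<delta> * int i}"
      by force
  qed
  show "(\<lambda>(i, k). (real i, real k + real i * d)) ` {(i, k). i < m \<and> int k < h + \<delta> * int i}
      \<subseteq> trap_base m h (d + of_int \<delta>) d"
  proof clarify
    fix i k assume "i < m" "int k < h + \<delta> * int i"
    then have "real_of_int (int k) \<le> real_of_int (\<delta> * int i + h - 1)"
      by (simp only: of_int_le_iff)
    moreover have "\<exists>a b :: int. (real i, real k + real i * d) = (of_int b, of_int a + of_int b * d)"
      by (intro exI[of _ "int k"] exI[of _ "int i"]) simp
    ultimately show "(real i, real k + real i * d) \<in> trap_base m h (d + of_int \<delta>) d"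
      using \<open>i < m\<close> unfolding trap_base_def by (auto simp: algebra_simps)
  qed
qed

lemma std_trapezoid_scaled_grid:
  fixes a :: "nat \<Rightarrow> nat" and \<delta> :: int
  assumes g: "g > 0" and \<beta>: "\<beta> > 0" and m: "1 \<le> m"
    and A: "A = (\<lambda>(i, k). (x0 + real i * g, y0 + real i * D + real k * \<beta>)) `
      {(i, k). i < m \<and> k < a i}"
    and lin: "\<And>i. i < m \<Longrightarrow> int (a i) = int (a 0) + int i * \<delta>"
    and pos: "\<And>i. i < m \<Longrightarrow> 1 \<le> a i"
  shows "std_trapezoid ((\<lambda>(x, y). (x / g, y / \<beta>)) ` A) m (int (a 0)) (D / \<beta> + of_int \<delta>) (D / \<beta>)"
proof -
  define h where "h = int (a 0)"
  have "k < a i \<longleftrightarrow> int k < h + \<delta> * int i" if "i < m" for i k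
    using lin[OF that] of_nat_less_iff[of k "a i", where 'a = int] by (simp add: h_def mult.commute)
  then have index: "{(i, k). i < m \<and> k < a i} = {(i, k). i < m \<and> int k < h + \<delta> * int i}"
    by auto
  have "(\<lambda>(x, y). (x / g, y / \<beta>)) ` A =
      (\<lambda>p. (x0 / g, y0 / \<beta>) + p) ` trap_base m h (D / \<beta> + of_int \<delta>) (D / \<beta>)"
    unfolding A trap_base_eq_image index image_image
    using g \<beta> by (intro image_cong) (auto simp: field_simps)
  moreover have "1 \<le> h + int (m - 1) * \<delta>"
    using lin[of "m - 1"] pos[of "m - 1"] m by (simp add: h_def)
  then have "real_of_int 1 \<le> real_of_int (h + int (m - 1) * \<delta>)"
    by (simp only: of_int_le_iff)
  then have "(real m - 1) * (D / \<beta>) \<le> real_of_int h - 1 + (real m - 1) * (D / \<beta> + of_int \<delta>)"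
    using m by (simp add: of_nat_diff algebra_simps)
  ultimately show ?thesis
    unfolding std_trapezoid_def h_def using m pos[of 0] by auto
qed

context sorted_abscissae
begin

lemma std_trapezoid_scaled:
  assumes "g > 0" "\<beta> > 0" "0 < length xs"
    and nth: "\<And>i. i < length xs \<Longrightarrow> xs ! i = xs ! 0 + real i * g"
    and Min_col: "\<And>i. i < length xs \<Longrightarrow> Min (col i) = Min (col 0) + real i * D"
    and card_col: "\<And>i. i < length xs \<Longrightarrow> int (card (col i)) = int (card (col 0)) + int i * \<delta>"
    and arith: "\<And>i. i < length xs \<Longrightarrow> arith_prog (col i) \<beta>"
  shows "std_trapezoid ((\<lambda>(x, y). (x / g, y / \<beta>)) ` A) (length xs) (int (card (col 0)))
           (D / \<beta> + of_int \<delta>) (D / \<beta>)"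
proof (rule std_trapezoid_scaled_grid[OF assms(1,2)])
  define x0 y0 where "x0 = xs ! 0" and "y0 = Min (col 0)"
  have x: "xs ! i = x0 + real i * g" if "i < length xs" for i
    using nth[OF that] by (simp add: x0_def)
  have col: "y \<in> col i \<longleftrightarrow> (\<exists>k < card (col i). y = y0 + real i * D + real k * \<beta>)"
    if "i < length xs" for i y
    using arith_prog_image[OF finite_col arith[OF that]] Min_col[OF that]
    by (auto simp: y0_def image_iff)
  show "A = (\<lambda>(i, k). (x0 + real i * g, y0 + real i * D + real k * \<beta>)) `
      {(i, k). i < length xs \<and> k < card (col i)}"
    by (auto simp: set_eq_iff mem_A_iff col x image_iff) (force simp: col x)
  show "1 \<le> length xs" using assms(3) by linarith
  show "int (card (col i)) = int (card (col 0)) + int i * \<delta>" if "i < length xs" for i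
    using card_col[OF that] .
  show "1 \<le> card (col i)" if "i < length xs" for i
    using card_col_pos[OF that] by simp
qed

end

context extremal_column_pair
begin

lemma std_trapezoids:
  assumes "\<not> collinear A" "\<not> collinear B"
  shows "\<exists>\<alpha> \<beta> :: real. \<alpha> > 0 \<and> \<beta> > 0 \<and>
           (\<exists>c d :: real. \<exists>h h' :: int. h \<ge> 1 \<and> h' \<ge> 1 \<and>
              std_trapezoid ((\<lambda>(x, y). (x / \<alpha>, y / \<beta>)) ` A) (length xs) h c d \<and>
              std_trapezoid ((\<lambda>(x, y). (x / \<alpha>, y / \<beta>)) ` B) (length ys) h' c d)"
proof -
  obtain \<beta> where \<beta>: "\<beta> > 0" "\<And>i. i < length xs \<Longrightarrow> arith_prog (a.col i) \<beta>"
      "\<And>j. j < length ys \<Longrightarrow> arith_prog (b.col j) \<beta>"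
    using common_step[OF assms] by blast
  define g where "g = ys ! 1 - ys ! 0"
  have "g > 0"
    using b.nth_le_nth_iff[of 1 0] two_le_length_ys by (force simp: g_def)
  have "0 < length xs" "0 < length ys"
    using two_le_length_xs two_le_length_ys by linarith+
  note trapezoid_A = a.std_trapezoid_scaled[OF \<open>g > 0\<close> \<beta>(1) \<open>0 < length xs\<close>
      nth_arith(1)[folded g_def] Min_col_arith(1) card_col_arith(1) \<beta>(2)]
  note trapezoid_B = b.std_trapezoid_scaled[OF \<open>g > 0\<close> \<beta>(1) \<open>0 < length ys\<close>
      nth_arith(2)[folded g_def] Min_col_arith(2) card_col_arith(2) \<beta>(3)]
  have "1 \<le> int (card (a.col 0))" "1 \<le> int (card (b.col 0))"
    using a.card_col_pos[of 0] b.card_col_pos[of 0] \<open>0 < length xs\<close> \<open>0 < length ys\<close> by linarith+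
  with trapezoid_A trapezoid_B \<open>g > 0\<close> \<beta>(1) show ?thesis by blast
qed

end

lemma two_le_card_fst_image:
  fixes A :: "(real \<times> real) set"
  assumes "finite A" "A \<noteq> {}" "\<not> collinear A"
  shows "2 \<le> card (fst ` A)"
proof (rule ccontr)
  assume "\<not> 2 \<le> card (fst ` A)"
  moreover have "card (fst ` A) \<noteq> 0" using assms(1,2) by simp
  ultimately have "card (fst ` A) = 1" by linarith
  then obtain x where x: "fst ` A = {x}" by (rule card_1_singletonE)
  have "\<exists>c. p = (x, 0) + c *\<^sub>R (0, 1)" if "p \<in> A" for p
    using x that by (intro exI[of _ "snd p"]) (auto simp: prod_eq_iff)
  then have "collinear A" unfolding collinear_alt by blast
  with assms(3) show False ..
qed

theorem theorem2p2:
  fixes A B :: "(real \<times> real) set" and m n :: nat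
  assumes "finite A" and "finite B"
    and "\<not> collinear A" and "\<not> collinear B"
    and "0 \<in> A \<inter> B"
    and "m = card (fst ` A)" and "n = card (fst ` B)"
    and "real (card (sumset A B)) =
           (real (card A) / real m + real (card B) / real n - 1) * (real m + real n - 1)"
  shows "\<exists>\<alpha> \<beta> :: real. \<alpha> > 0 \<and> \<beta> > 0 \<and>
           (\<exists>c d :: real. \<exists>h h' :: int. h \<ge> 1 \<and> h' \<ge> 1 \<and>
              std_trapezoid ((\<lambda>(x, y). (x / \<alpha>, y / \<beta>)) ` A) m h c d \<and>
              std_trapezoid ((\<lambda>(x, y). (x / \<alpha>, y / \<beta>)) ` B) n h' c d)"
proof -
  define xs ys where "xs = sorted_list_of_set (fst ` A)" and "ys = sorted_list_of_set (fst ` B)"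
  interpret column_pair A xs B ys
    by unfold_locales (simp_all add: assms(1,2) xs_def ys_def)
  have len: "length xs = m" "length ys = n"
    using assms(6,7) by (simp_all add: xs_def ys_def)
  \<comment> \<open>The hypothesis \<open>0 \<in> A \<inter> B\<close> is only needed for \<open>A\<close> and \<open>B\<close> to be nonempty.\<close>
  have "2 \<le> m" "2 \<le> n"
    using two_le_card_fst_image assms(1-7) by auto
  then have "tight (m - 1) (n - 1)"
    using a.pref_last b.pref_last len assms(8)
    by (simp add: tight_def bound_def prefix_sum_def sumset_eq_set_plus of_nat_diff algebra_simps)
  then interpret extremal_column_pair A xs B ys
    by unfold_locales (use len \<open>2 \<le> m\<close> \<open>2 \<le> n\<close> in auto)
  show ?thesis
    using std_trapezoids assms(3,4) len by simp
qed

end
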